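(* Let $n,m$ be positive integers with $2(m+1)\leq n$ and let $I$ be a non-empty independent set of $C_n^m$. Then $\gamma_{gr}(C_n^m,I)=n-|I|m$ if $|I|\geq 2$, and $\gamma_{gr}(C_n^m,I)=n-2m$ if $|I|=1$.
   Context: $C_n^m$ is the $m$-th power of the cycle $C_n$: vertex set $[n]=\{1,\dots,n\}$ (with addition modulo $n$), two distinct vertices being adjacent iff their distance in the cycle $1,2,\dots,n,1$ is at most $m$. For a sequence $S=(v_1,\dots,v_k)$ of distinct vertices, $\widehat S$ is its set of vertices, $|S|=k$, $PN_S(v_i)=N[v_i]\setminus\bigcup_{j<i}N[v_j]$ ($N[\cdot]$ the closed neighborhood). $S$ is a legal dominating sequence if $\widehat S$ is dominating and each $PN_S(v_i)\ne\emptyset$. For such $S$, the footprinter $f_S(x)$ of $x$ is the unique $v\in\widehat S$ with $x\in PN_S(v)$, and $I_S=\{v:f_S(v)=v\}$. For an independent set $I$, $\gamma_{gr}(G,I)$ is the maximum length of a legal dominating sequence $S$ of $G$ with $I_S=I$ ($-\infty$ if none exists). *)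

theory Defs
  imports Main "HOL-Library.Extended_Real"
begin

(* Graphs are given by a vertex set V and a symmetric irreflexive adjacency relation E. *)

definition closed_nbhd :: "'a set \<Rightarrow> ('a \<Rightarrow> 'a \<Rightarrow> bool) \<Rightarrow> 'a \<Rightarrow> 'a set" where
  "closed_nbhd V E v = {u \<in> V. u = v \<or> E v u}"

definition dominating :: "'a set \<Rightarrow> ('a \<Rightarrow> 'a \<Rightarrow> bool) \<Rightarrow> 'a set \<Rightarrow> bool" where
  "dominating V E D \<longleftrightarrow> D \<subseteq> V \<and> (\<forall>x\<in>V. \<exists>d\<in>D. x \<in> closed_nbhd V E d)"

definition independent :: "'a set \<Rightarrow> ('a \<Rightarrow> 'a \<Rightarrow> bool) \<Rightarrow> 'a set \<Rightarrow> bool" where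
  "independent V E I \<longleftrightarrow> I \<subseteq> V \<and> (\<forall>u\<in>I. \<forall>v\<in>I. \<not> E u v)"

(* private neighbourhood of the i-th (0-based) vertex of the sequence S *)
definition PN :: "'a set \<Rightarrow> ('a \<Rightarrow> 'a \<Rightarrow> bool) \<Rightarrow> 'a list \<Rightarrow> nat \<Rightarrow> 'a set" where
  "PN V E S i = closed_nbhd V E (S ! i) - (\<Union>j<i. closed_nbhd V E (S ! j))"

definition legal_dom_seq :: "'a set \<Rightarrow> ('a \<Rightarrow> 'a \<Rightarrow> bool) \<Rightarrow> 'a list \<Rightarrow> bool" where
  "legal_dom_seq V E S \<longleftrightarrow> distinct S \<and> set S \<subseteq> V \<and> dominating V E (set S)
      \<and> (\<forall>i<length S. PN V E S i \<noteq> {})"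

definition footprinter :: "'a set \<Rightarrow> ('a \<Rightarrow> 'a \<Rightarrow> bool) \<Rightarrow> 'a list \<Rightarrow> 'a \<Rightarrow> 'a" where
  "footprinter V E S x = S ! (THE i. i < length S \<and> x \<in> PN V E S i)"

definition I_S :: "'a set \<Rightarrow> ('a \<Rightarrow> 'a \<Rightarrow> bool) \<Rightarrow> 'a list \<Rightarrow> 'a set" where
  "I_S V E S = {v \<in> V. footprinter V E S v = v}"

(* maximum length of a legal dominating sequence S with I_S = I; -\<infinity> (= Sup {}) if none *)
definition gamma_gr :: "'a set \<Rightarrow> ('a \<Rightarrow> 'a \<Rightarrow> bool) \<Rightarrow> 'a set \<Rightarrow> ereal" where
  "gamma_gr V E I = Sup {ereal (real (length S)) | S. legal_dom_seq V E S \<and> I_S V E S = I}"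

(* the m-th power of the cycle 1,2,...,n,1 on vertex set {1..n} *)
definition cyc_dist :: "nat \<Rightarrow> nat \<Rightarrow> nat \<Rightarrow> nat" where
  "cyc_dist n i j = min (nat \<bar>int i - int j\<bar>) (n - nat \<bar>int i - int j\<bar>)"

definition cpow_adj :: "nat \<Rightarrow> nat \<Rightarrow> nat \<Rightarrow> nat \<Rightarrow> bool" where
  "cpow_adj n m u v \<longleftrightarrow> u \<noteq> v \<and> cyc_dist n u v \<le> m"

end

(*
  Identify the vertices of C_n^m with the integers modulo n (wrap n), so that closed
  neighbourhoods are images of integer intervals [z - m, z + m].

  For a legal sequence S let D be the set of vertices it dominates; D is a
  union of arcs of the cycle, counted by their right ends. The potential
  m * (|I_S| + number of arcs of D) never exceeds |D - S|: appending a vertex that does not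
  footprint itself can only merge arcs, and appending one that does opens at most one new
  arc, while on each side where it does not meet an existing arc it dominates m new
  vertices. When S dominates there are no arcs, so m |I| + |S| <= n. Applied to S without
  its last vertex, whose dominated set still has an arc and which contains a
  self-footprinting vertex, it gives 2m + |S| <= n.

  Lift I to integers a < ... < T with T - a < n - m. Starting from a, first
  walk leftwards until the dominated arc begins at T + 1 - n, then sweep rightwards up to
  T - 1 adding q exactly when no element of I lies in (q, q + m], so that q + m is a new
  private neighbour and each element of I footprints itself; finally add T. Only the m
  vertices after T and at most m vertices before each other element of I are left out.
  For |I| = 1 the same sweep towards a virtual endpoint a + n - m leaves out exactly 2m.
*)
theory Submission
  imports Defs
begin

section \<open>Legal sequences in an arbitrary graph\<close>

definition dominated :: "'a set \<Rightarrow> ('a \<Rightarrow> 'a \<Rightarrow> bool) \<Rightarrow> 'a list \<Rightarrow> 'a set" where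
  "dominated V E S = (\<Union>s\<in>set S. closed_nbhd V E s)"

definition legal_seq :: "'a set \<Rightarrow> ('a \<Rightarrow> 'a \<Rightarrow> bool) \<Rightarrow> 'a list \<Rightarrow> bool" where
  "legal_seq V E S \<longleftrightarrow> distinct S \<and> set S \<subseteq> V \<and> (\<forall>i<length S. PN V E S i \<noteq> {})"

text \<open>The vertices that footprint themselves; unlike \<^const>\<open>I_S\<close> this is meaningful for
  prefixes of a legal dominating sequence.\<close>

definition self_private :: "'a set \<Rightarrow> ('a \<Rightarrow> 'a \<Rightarrow> bool) \<Rightarrow> 'a list \<Rightarrow> 'a set" where
  "self_private V E S = {S ! i | i. i < length S \<and> S ! i \<in> PN V E S i}"

lemma closed_nbhd_subset: "closed_nbhd V E x \<subseteq> V"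
  by (auto simp: closed_nbhd_def)

lemma self_in_closed_nbhd: "x \<in> V \<Longrightarrow> x \<in> closed_nbhd V E x"
  by (auto simp: closed_nbhd_def)

lemma dominated_Nil [simp]: "dominated V E [] = {}"
  by (simp add: dominated_def)

lemma dominated_snoc [simp]: "dominated V E (S @ [x]) = dominated V E S \<union> closed_nbhd V E x"
  by (auto simp: dominated_def)

lemma dominated_single [simp]: "dominated V E [x] = closed_nbhd V E x"
  by (simp add: dominated_def)

lemma dominated_subset: "dominated V E S \<subseteq> V"
  by (auto simp: dominated_def closed_nbhd_def)

lemma set_subset_dominated: "set S \<subseteq> V \<Longrightarrow> set S \<subseteq> dominated V E S"
  by (auto simp: dominated_def intro: self_in_closed_nbhd)

lemma PN_snoc: "i < length S \<Longrightarrow> PN V E (S @ [x]) i = PN V E S i"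
  by (simp add: PN_def nth_append)

lemma PN_snoc_last: "PN V E (S @ [x]) (length S) = closed_nbhd V E x - dominated V E S"
proof -
  have "set S = (!) S ` {..<length S}"
    by (auto simp: in_set_conv_nth)
  then show ?thesis
    by (simp add: PN_def dominated_def nth_append)
qed

lemma legal_seq_Nil [simp]: "legal_seq V E []"
  by (simp add: legal_seq_def)

lemma legal_seq_snoc:
  "legal_seq V E (S @ [x]) \<longleftrightarrow>
     legal_seq V E S \<and> x \<in> V \<and> x \<notin> set S \<and> closed_nbhd V E x - dominated V E S \<noteq> {}"
  by (auto simp: legal_seq_def PN_snoc PN_snoc_last less_Suc_eq)

lemma self_private_Nil [simp]: "self_private V E [] = {}"
  by (simp add: self_private_def)

lemma self_private_snoc:
  assumes "x \<in> V"
  shows "self_private V E (S @ [x]) =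
           self_private V E S \<union> (if x \<in> dominated V E S then {} else {x})"
proof -
  have old: "{(S @ [x]) ! i | i. i < length S \<and> (S @ [x]) ! i \<in> PN V E (S @ [x]) i} =
             self_private V E S"
    by (auto simp: self_private_def PN_snoc nth_append)
  have last: "x \<in> PN V E (S @ [x]) (length S) \<longleftrightarrow> x \<notin> dominated V E S"
    using assms by (simp add: PN_snoc_last self_in_closed_nbhd)
  have "self_private V E (S @ [x]) =
        {(S @ [x]) ! i | i. i < length S \<and> (S @ [x]) ! i \<in> PN V E (S @ [x]) i}
        \<union> (if x \<in> PN V E (S @ [x]) (length S) then {x} else {})"
    unfolding self_private_def by (auto simp: less_Suc_eq) (metis lessI nth_append_length)
  then show ?thesis
    using old last by auto
qed

lemma self_private_subset: "self_private V E S \<subseteq> set S"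
  by (auto simp: self_private_def)

lemma finite_self_private: "finite (self_private V E S)"
  using finite_subset[OF self_private_subset] by simp

lemma legal_seq_single: "x \<in> V \<Longrightarrow> legal_seq V E [x]"
  using legal_seq_snoc[of V E "[]" x] self_in_closed_nbhd[of x V E] by auto

lemma self_private_single: "x \<in> V \<Longrightarrow> self_private V E [x] = {x}"
  using self_private_snoc[of x V E "[]"] by simp

lemma first_in_self_private: "S \<noteq> [] \<Longrightarrow> set S \<subseteq> V \<Longrightarrow> S ! 0 \<in> self_private V E S"
  unfolding self_private_def PN_def by (auto intro!: exI[of _ 0] self_in_closed_nbhd)

lemma legal_dom_seq_iff: "legal_dom_seq V E S \<longleftrightarrow> legal_seq V E S \<and> dominated V E S = V"
  using dominated_subset[of V E S]
  by (auto simp: legal_dom_seq_def legal_seq_def dominated_def dominating_def)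

lemma PN_index_unique:
  assumes "v \<in> PN V E S i" "v \<in> PN V E S j"
  shows "i = j"
  using assms unfolding PN_def by (metis DiffD1 DiffD2 UN_I lessThan_iff linorder_neqE_nat)

lemma footprinter_eq:
  assumes "i < length S" "v \<in> PN V E S i"
  shows "footprinter V E S v = S ! i"
proof -
  have "(THE i. i < length S \<and> v \<in> PN V E S i) = i"
    using assms PN_index_unique by (intro the_equality) auto
  then show ?thesis
    by (simp add: footprinter_def)
qed

lemma dominated_in_PN:
  assumes "v \<in> dominated V E S"
  obtains i where "i < length S" "v \<in> PN V E S i"
proof -
  let ?P = "\<lambda>i. i < length S \<and> v \<in> closed_nbhd V E (S ! i)"
  define i where "i = (LEAST i. ?P i)"
  have "\<exists>i. ?P i"
    using assms by (auto simp: dominated_def in_set_conv_nth)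
  then have "?P i"
    unfolding i_def by (rule LeastI_ex)
  moreover have "\<not> ?P j" if "j < i" for j
    using that not_less_Least unfolding i_def by blast
  ultimately have "i < length S" "v \<in> PN V E S i"
    unfolding PN_def by (meson DiffI UN_E lessThan_iff order.strict_trans)+
  then show ?thesis
    by (rule that)
qed

lemma I_S_eq_self_private:
  assumes "legal_dom_seq V E S"
  shows "I_S V E S = self_private V E S"
proof (intro equalityI subsetI)
  have dom: "dominated V E S = V"
    using assms by (simp add: legal_dom_seq_iff)
  have sub: "set S \<subseteq> V"
    using assms by (simp add: legal_dom_seq_def)
  fix v
  show "v \<in> self_private V E S" if "v \<in> I_S V E S"
  proof -
    have v: "v \<in> V" "footprinter V E S v = v"
      using that unfolding I_S_def by auto
    obtain i where i: "i < length S" "v \<in> PN V E S i"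
      using dom v(1) by (metis dominated_in_PN)
    then have "S ! i = v"
      using footprinter_eq v(2) by metis
    then show ?thesis
      unfolding self_private_def using i by blast
  qed
  show "v \<in> I_S V E S" if v: "v \<in> self_private V E S"
  proof -
    obtain i where i: "i < length S" "S ! i = v" "v \<in> PN V E S i"
      using v unfolding self_private_def by blast
    then have "v \<in> V"
      using sub nth_mem by blast
    then show ?thesis
      unfolding I_S_def using footprinter_eq[OF i(1,3)] i(2) by simp
  qed
qed

lemma gamma_gr_eqI:
  assumes "\<And>S. legal_dom_seq V E S \<Longrightarrow> I_S V E S = I \<Longrightarrow> length S \<le> L"
    and "legal_dom_seq V E S" "I_S V E S = I" "L \<le> length S"
  shows "gamma_gr V E I = ereal (real L)"
  unfolding gamma_gr_def
proof (rule Sup_eqI)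
  fix y assume "y \<in> {ereal (real (length S)) |S. legal_dom_seq V E S \<and> I_S V E S = I}"
  then show "y \<le> ereal (real L)"
    using assms(1) by auto
next
  fix y assume "\<And>z. z \<in> {ereal (real (length S)) |S. legal_dom_seq V E S \<and> I_S V E S = I} \<Longrightarrow> z \<le> y"
  then have "ereal (real (length S)) \<le> y"
    using assms(2,3) by blast
  then show "ereal (real L) \<le> y"
    using assms(4) by (meson ereal_less_eq(3) of_nat_mono order.trans)
qed

lemma card_Un_Diff_insert:
  assumes "finite D" "finite J" "P \<subseteq> D" "x \<notin> P" "x \<in> J"
  shows "card ((D \<union> J) - insert x P) + 1 = card (D - P) + card (J - D)"
proof -
  have x: "x \<in> (D \<union> J) - P" and fin: "finite ((D \<union> J) - P)"
    using assms by auto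
  have "(D \<union> J) - insert x P = ((D \<union> J) - P) - {x}"
    by blast
  then have "card ((D \<union> J) - P) = card ((D \<union> J) - insert x P) + 1"
    using card_Diff_singleton[OF x] card_gt_0_iff[of "(D \<union> J) - P"] fin x by force
  moreover have "(D \<union> J) - P = (D - P) \<union> (J - D)"
    using assms by blast
  moreover have "card ((D - P) \<union> (J - D)) = card (D - P) + card (J - D)"
    using assms by (intro card_Un_disjoint) auto
  ultimately show ?thesis
    by simp
qed

lemma card_dominated_Diff_snoc:
  assumes "finite V" "legal_seq V E (S @ [x])"
  shows "card (dominated V E (S @ [x]) - set (S @ [x])) + 1
         = card (dominated V E S - set S) + card (closed_nbhd V E x - dominated V E S)"
proof -
  have x: "x \<in> V" "x \<notin> set S" and S: "set S \<subseteq> V"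
    using assms(2) by (auto simp: legal_seq_snoc legal_seq_def)
  have "finite (dominated V E S)" "finite (closed_nbhd V E x)"
    using assms(1) by (auto intro: finite_subset[OF dominated_subset] finite_subset[OF closed_nbhd_subset])
  then show ?thesis
    using card_Un_Diff_insert[of _ _ "set S" x] set_subset_dominated[OF S] x
      self_in_closed_nbhd[OF x(1)] by simp
qed

lemma card_dominated_Diff_snoc_le:
  assumes "finite V" "legal_seq V E (S @ [x])"
  shows "card (dominated V E S - set S) \<le> card (dominated V E (S @ [x]) - set (S @ [x]))"
proof -
  have "closed_nbhd V E x - dominated V E S \<noteq> {}"
    using assms(2) by (simp add: legal_seq_snoc)
  then have "0 < card (closed_nbhd V E x - dominated V E S)"
    using assms(1) by (auto simp: card_gt_0_iff intro: finite_subset[OF closed_nbhd_subset])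
  then show ?thesis
    using card_dominated_Diff_snoc[OF assms] by linarith
qed

section \<open>Integer coordinates on the cycle\<close>

definition wrap :: "nat \<Rightarrow> int \<Rightarrow> nat" where
  "wrap n z = nat ((z - 1) mod int n) + 1"

lemma wrap_in_range: "0 < n \<Longrightarrow> wrap n z \<in> {1..n}"
proof -
  assume "0 < n"
  then have "(z - 1) mod int n < int n" "0 \<le> (z - 1) mod int n"
    by auto
  then show ?thesis
    unfolding wrap_def by auto
qed

lemma wrap_eq_self: "1 \<le> z \<Longrightarrow> z \<le> int n \<Longrightarrow> wrap n z = nat z"
  unfolding wrap_def by (simp add: mod_pos_pos_trivial)

lemma wrap_of_nat: "v \<in> {1..n} \<Longrightarrow> wrap n (int v) = v"
  by (simp add: wrap_eq_self)

lemma wrap_below: "1 - int n \<le> z \<Longrightarrow> z \<le> 0 \<Longrightarrow> wrap n z = nat (z + n)"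
proof -
  assume z: "1 - int n \<le> z" "z \<le> 0"
  have "(z - 1) mod int n = (z - 1 + int n) mod int n"
    by simp
  also have "\<dots> = z - 1 + int n"
    using z by (intro mod_pos_pos_trivial) auto
  finally show ?thesis
    using z unfolding wrap_def by auto
qed

lemma wrap_above: "int n + 1 \<le> z \<Longrightarrow> z \<le> 2 * int n \<Longrightarrow> wrap n z = nat (z - n)"
proof -
  assume z: "int n + 1 \<le> z" "z \<le> 2 * int n"
  have "(z - 1) mod int n = (z - 1 - int n) mod int n"
    using mod_add_self2[of "z - 1 - int n" "int n"] by simp
  also have "\<dots> = z - 1 - int n"
    using z by (intro mod_pos_pos_trivial) auto
  finally show ?thesis
    using z unfolding wrap_def by auto
qed

lemma wrap_eq_iff: "0 < n \<Longrightarrow> wrap n a = wrap n b \<longleftrightarrow> a mod int n = b mod int n"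
proof -
  assume n: "0 < n"
  have "0 \<le> (a - 1) mod int n" "0 \<le> (b - 1) mod int n"
    using n by auto
  then have "wrap n a = wrap n b \<longleftrightarrow> (a - 1) mod int n = (b - 1) mod int n"
    unfolding wrap_def by (auto simp: nat_eq_iff)
  also have "\<dots> \<longleftrightarrow> a mod int n = b mod int n"
    by (metis diff_add_cancel mod_add_cong mod_diff_cong)
  finally show ?thesis .
qed

lemma wrap_add_mult: "wrap n (z + int n * k) = wrap n z"
proof -
  have "(z + int n * k - 1) mod int n = (z - 1) mod int n"
    using mod_mult_self2[of "z - 1" "int n" k] by (simp add: algebra_simps)
  then show ?thesis
    unfolding wrap_def by simp
qed

lemma wrap_wrap_add: "0 < n \<Longrightarrow> wrap n (int (wrap n z) + k) = wrap n (z + k)"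
proof -
  assume n: "0 < n"
  have "int (wrap n z) = (z - 1) mod int n + 1"
    using n unfolding wrap_def by simp
  then have "(int (wrap n z) + k) mod int n = (z + k) mod int n"
    by (metis add.commute add_diff_cancel_left' diff_add_eq mod_add_left_eq mod_diff_left_eq)
  then show ?thesis
    using wrap_eq_iff[OF n] by blast
qed

lemma inj_on_wrap:
  assumes "0 < n" "hi - lo < int n"
  shows "inj_on (wrap n) {lo..hi}"
proof
  fix a b assume ab: "a \<in> {lo..hi}" "b \<in> {lo..hi}" "wrap n a = wrap n b"
  then have "int n dvd a - b"
    using wrap_eq_iff[OF assms(1)] by (simp add: mod_eq_dvd_iff)
  moreover have "\<bar>a - b\<bar> < int n"
    using ab assms by (simp add: abs_less_iff)
  ultimately show "a = b"
    using dvd_imp_le_int[of "a - b" "int n"] by fastforce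
qed

lemma card_wrap_image:
  assumes "0 < n" "hi - lo < int n"
  shows "card (wrap n ` {lo..hi}) = nat (hi - lo + 1)"
  using card_image[OF inj_on_wrap[OF assms]] by simp

lemma wrap_notin_image:
  assumes "0 < n" "lo \<le> z" "z \<le> hi" "hi - lo < int n" "z \<notin> A" "A \<subseteq> {lo..hi}"
  shows "wrap n z \<notin> wrap n ` A"
  using inj_on_wrap[OF assms(1,4)] assms(2,3,5,6) by (auto dest: inj_onD)

lemma wrap_image_shift: "int n dvd d \<Longrightarrow> wrap n ` {a + d..b + d} = wrap n ` {a..b}"
proof -
  assume "int n dvd d"
  then obtain k where k: "d = int n * k"
    by (auto elim: dvdE)
  have "{a + d..b + d} = (\<lambda>z. z + d) ` {a..b}"
    by (simp add: image_add_atLeastAtMost')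
  then have "wrap n ` {a + d..b + d} = (\<lambda>z. wrap n (z + d)) ` {a..b}"
    by (simp only: image_image)
  also have "\<dots> = wrap n ` {a..b}"
    using k wrap_add_mult by simp
  finally show ?thesis .
qed

lemma wrap_image_full:
  assumes "0 < n"
  shows "wrap n ` {lo..lo + int n - 1} = {1..n}"
proof -
  have "wrap n ` {lo..lo + int n - 1} \<subseteq> {1..n}"
    using wrap_in_range assms by auto
  moreover have "card (wrap n ` {lo..lo + int n - 1}) = card {1..n}"
    using card_wrap_image[OF assms, of "lo + int n - 1" lo] by simp
  ultimately show ?thesis
    by (simp add: card_subset_eq)
qed

lemma cyc_dist_le_iff:
  "cyc_dist n v u \<le> m \<longleftrightarrow> \<bar>int v - int u\<bar> \<le> int m \<or> int n - \<bar>int v - int u\<bar> \<le> int m"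
  if "u \<le> n" "v \<le> n"
  using that unfolding cyc_dist_def by auto

lemma closed_nbhd_cpow_adj:
  assumes "2 * m < n" "v \<in> {1..n}"
  shows "closed_nbhd {1..n} (cpow_adj n m) v = wrap n ` {int v - m..int v + m}"
proof -
  have "closed_nbhd {1..n} (cpow_adj n m) v = {u \<in> {1..n}. cyc_dist n v u \<le> m}"
    unfolding closed_nbhd_def cpow_adj_def by (auto simp: cyc_dist_def)
  also have "\<dots> = wrap n ` {int v - m..int v + m}"
  proof (intro equalityI subsetI)
    fix u assume "u \<in> {u \<in> {1..n}. cyc_dist n v u \<le> m}"
    then have u: "1 \<le> u" "u \<le> n"
      and d: "\<bar>int v - int u\<bar> \<le> int m \<or> int n - \<bar>int v - int u\<bar> \<le> int m"
      using cyc_dist_le_iff[of u n v m] assms by auto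
    consider "\<bar>int v - int u\<bar> \<le> int m" | "u > v" "int n - (int u - int v) \<le> int m"
      | "u \<le> v" "int n - (int v - int u) \<le> int m"
      using d by linarith
    then show "u \<in> wrap n ` {int v - m..int v + m}"
    proof cases
      case 1
      then show ?thesis
        using u wrap_eq_self[of "int u" n] by (intro image_eqI[of _ _ "int u"]) auto
    next
      case 2
      then show ?thesis
        using u assms wrap_below[of n "int u - int n"] by (intro image_eqI[of _ _ "int u - int n"]) auto
    next
      case 3
      then show ?thesis
        using u assms wrap_above[of n "int u + int n"] by (intro image_eqI[of _ _ "int u + int n"]) auto
    qed
  next
    fix u assume "u \<in> wrap n ` {int v - m..int v + m}"
    then obtain z where z: "z \<in> {int v - m..int v + m}" "u = wrap n z"
      by auto
    have u: "u \<in> {1..n}"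
      using z wrap_in_range assms by auto
    consider "z \<le> 0" "u = nat (z + n)" | "1 \<le> z" "z \<le> int n" "u = nat z"
      | "int n + 1 \<le> z" "u = nat (z - n)"
      using z assms wrap_below[of n z] wrap_eq_self[of z n] wrap_above[of n z] by force
    then have "cyc_dist n v u \<le> m"
      by cases (use z assms u in \<open>auto simp: cyc_dist_le_iff\<close>)
    then show "u \<in> {u \<in> {1..n}. cyc_dist n v u \<le> m}"
      using u by auto
  qed
  finally show ?thesis .
qed

lemma closed_nbhd_cpow_adj_wrap:
  assumes "2 * m < n"
  shows "closed_nbhd {1..n} (cpow_adj n m) (wrap n q) = wrap n ` {q - m..q + m}"
proof -
  have n: "0 < n"
    using assms by auto
  have "wrap n (int (wrap n q)) = wrap n q"
    using wrap_of_nat[OF wrap_in_range[OF n]] .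
  then have "int n dvd int (wrap n q) - q"
    using wrap_eq_iff[OF n] by (simp add: mod_eq_dvd_iff)
  then have "wrap n ` {q - m..q + m} = wrap n ` {int (wrap n q) - m..int (wrap n q) + m}"
    using wrap_image_shift[of n "int (wrap n q) - q" "q - m" "q + m"] by (simp add: algebra_simps)
  then show ?thesis
    using closed_nbhd_cpow_adj[OF assms wrap_in_range[OF n]] by simp
qed

section \<open>The upper bound\<close>

text \<open>The last vertices of the maximal arcs of \<open>D\<close>; for \<open>{} \<noteq> D \<subset> {1..n}\<close> they count
  the arcs.\<close>

definition right_ends :: "nat \<Rightarrow> nat set \<Rightarrow> nat set" where
  "right_ends n D = {x \<in> {1..n}. x \<in> D \<and> wrap n (int x + 1) \<notin> D}"

lemma finite_right_ends: "finite (right_ends n D)"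
  unfolding right_ends_def by auto

lemma wrap_in_right_ends:
  "0 < n \<Longrightarrow> wrap n z \<in> D \<Longrightarrow> wrap n (z + 1) \<notin> D \<Longrightarrow> wrap n z \<in> right_ends n D"
  unfolding right_ends_def using wrap_in_range wrap_wrap_add by auto

lemma notin_if_no_right_ends:
  assumes "0 < n" "wrap n (hi + 1) \<notin> D" "right_ends n D \<inter> wrap n ` {lo..hi} = {}"
    and "lo \<le> z" "z \<le> hi + 1"
  shows "wrap n z \<notin> D"
proof -
  have "wrap n (hi + 1 - int k) \<notin> D" if "lo \<le> hi + 1 - int k" for k
    using that
  proof (induction k)
    case 0
    then show ?case
      using assms(2) by simp
  next
    case (Suc k)
    have "hi + 1 - int (Suc k) \<in> {lo..hi}"
      using Suc.prems by auto
    moreover have "wrap n (hi + 1 - int (Suc k) + 1) \<notin> D"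
      using Suc by (simp add: algebra_simps)
    ultimately show ?case
      using wrap_in_right_ends[OF assms(1)] assms(3) by blast
  qed
  from this[of "nat (hi + 1 - z)"] show ?thesis
    using assms(4,5) by simp
qed

lemma card_right_ends_Un_window:
  fixes c :: int and m :: nat
  assumes "0 < n" "D \<subseteq> {1..n}"
  shows "card (right_ends n (D \<union> wrap n ` {c - m..c + m}))
           + card (right_ends n D \<inter> wrap n ` {c - m - 1..c + m})
         \<le> card (right_ends n D) + of_bool (wrap n (c + m + 1) \<notin> D)"
proof -
  let ?J = "wrap n ` {c - m..c + m}" and ?W = "wrap n ` {c - m - 1..c + m}"
  let ?E = "if wrap n (c + m + 1) \<in> D then {} else {wrap n (c + m)}"
  have "right_ends n (D \<union> ?J) \<subseteq> (right_ends n D - ?W) \<union> ?E"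
  proof
    fix x assume x: "x \<in> right_ends n (D \<union> ?J)"
    then have xV: "x \<in> {1..n}" and xD: "x \<in> D \<union> ?J" and xn: "wrap n (int x + 1) \<notin> D \<union> ?J"
      unfolding right_ends_def by auto
    show "x \<in> (right_ends n D - ?W) \<union> ?E"
    proof (cases "x \<in> ?W")
      case True
      then obtain z where z: "z \<in> {c - m - 1..c + m}" "x = wrap n z"
        by auto
      have x1: "wrap n (int x + 1) = wrap n (z + 1)"
        using z wrap_wrap_add[OF assms(1)] by simp
      have "z + 1 \<notin> {c - m..c + m}"
        using xn x1 by auto
      then have "z = c + m"
        using z by auto
      then show ?thesis
        using z x1 xn by auto
    next
      case False
      then have "x \<in> D"
        using xD by auto
      then show ?thesis
        using xV xn False unfolding right_ends_def by auto
    qed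
  qed
  then have "card (right_ends n (D \<union> ?J)) \<le> card ((right_ends n D - ?W) \<union> ?E)"
    by (intro card_mono) (auto simp: finite_right_ends)
  also have "\<dots> \<le> card (right_ends n D - ?W) + card ?E"
    by (rule card_Un_le)
  finally have "card (right_ends n (D \<union> ?J)) \<le> card (right_ends n D - ?W) + card ?E" .
  moreover have "card (right_ends n D) = card (right_ends n D - ?W) + card (right_ends n D \<inter> ?W)"
    using card_Int_Diff[OF finite_right_ends, of n D ?W] by linarith
  moreover have "card ?E = of_bool (wrap n (c + m + 1) \<notin> D)"
    by simp
  ultimately show ?thesis
    by linarith
qed

lemma card_right_ends_window_split:
  fixes c :: int and m :: nat
  assumes "0 < n" "2 * m + 2 \<le> n"
  shows "card (right_ends n D \<inter> wrap n ` {c - m - 1..c + m})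
         = card (right_ends n D \<inter> wrap n ` {c - m - 1..c - 1})
           + card (right_ends n D \<inter> wrap n ` {c..c + m})"
proof -
  have inj: "inj_on (wrap n) {c - m - 1..c + m}"
    using inj_on_wrap[OF assms(1)] assms(2) by simp
  have "wrap n ` {c - m - 1..c - 1} \<inter> wrap n ` {c..c + m} = {}"
    using inj_on_image_Int[OF inj, of "{c - m - 1..c - 1}" "{c..c + m}"] by auto
  moreover have "wrap n ` {c - m - 1..c + m} = wrap n ` {c - m - 1..c - 1} \<union> wrap n ` {c..c + m}"
    by (auto simp: image_Un[symmetric] intro!: arg_cong[where f = "image (wrap n)"])
  ultimately show ?thesis
    by (simp add: Int_Un_distrib card_Un_disjoint finite_right_ends disjoint_iff)
qed

locale cycle_power =
  fixes n m :: nat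
  assumes m_pos: "0 < m" and n_ge: "2 * (m + 1) \<le> n"
begin

abbreviation "GV \<equiv> {1..n}"
abbreviation "GE \<equiv> cpow_adj n m"
abbreviation "NB x \<equiv> closed_nbhd GV GE x"

lemma n_pos: "0 < n"
  using n_ge by auto

lemma NB_wrap: "NB (wrap n q) = wrap n ` {q - m..q + m}"
  using closed_nbhd_cpow_adj_wrap[of m n q] n_ge by auto

lemma NB_eq: "x \<in> GV \<Longrightarrow> NB x = wrap n ` {int x - m..int x + m}"
  using closed_nbhd_cpow_adj[of m n x] n_ge by auto

lemma card_NB: "x \<in> GV \<Longrightarrow> card (NB x) = 2 * m + 1"
  using NB_eq card_wrap_image[OF n_pos, of "int x + m" "int x - m"] n_ge by simp

lemma card_right_ends_dominated_step:
  assumes "D \<subseteq> GV" "x \<in> GV" "x \<in> D"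
  shows "card (right_ends n (D \<union> NB x)) \<le> card (right_ends n D)"
proof -
  define c where "c = int x"
  have x: "wrap n c = x" "NB x = wrap n ` {c - m..c + m}"
    using assms(2) wrap_of_nat NB_eq c_def by auto
  have "right_ends n D \<inter> wrap n ` {c - m - 1..c + m} \<noteq> {}"
    if "wrap n (c + m + 1) \<notin> D"
  proof
    assume "right_ends n D \<inter> wrap n ` {c - m - 1..c + m} = {}"
    then have "right_ends n D \<inter> wrap n ` {c..c + m} = {}"
      by auto
    then have "wrap n c \<notin> D"
      using notin_if_no_right_ends[OF n_pos] that by simp
    then show False
      using assms(3) x by simp
  qed
  then have "of_bool (wrap n (c + m + 1) \<notin> D)
             \<le> card (right_ends n D \<inter> wrap n ` {c - m - 1..c + m})"
    by (simp add: Suc_le_eq card_gt_0_iff finite_right_ends)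
  then show ?thesis
    using card_right_ends_Un_window[OF n_pos assms(1), of c m] x by simp
qed

lemma card_NB_Diff_private:
  assumes "x \<in> GV" "x \<notin> D"
  shows "m * (of_bool (right_ends n D \<inter> wrap n ` {int x - m - 1..int x - 1} = {})
              + of_bool (right_ends n D \<inter> wrap n ` {int x..int x + m} = {}
                         \<and> wrap n (int x + m + 1) \<notin> D)) + 1
         \<le> card (NB x - D)" (is "m * (of_bool ?L + of_bool ?R) + 1 \<le> _")
proof -
  define c where "c = int x"
  have x: "wrap n c = x" "NB x = wrap n ` {c - m..c + m}"
    using assms(1) wrap_of_nat NB_eq c_def by auto
  have fin: "finite (NB x - D)"
    using x(2) by simp
  have left: "wrap n ` {c - m..c} \<subseteq> NB x - D" if ?L
    using notin_if_no_right_ends[OF n_pos, of "c - 1" D "c - m - 1"] that assms(2) x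
    unfolding c_def by auto
  have right: "wrap n ` {c..c + m} \<subseteq> NB x - D" if ?R
    using notin_if_no_right_ends[OF n_pos, of "c + m" D c] that x unfolding c_def by auto
  have half: "card (wrap n ` {c - m..c}) = m + 1" "card (wrap n ` {c..c + m}) = m + 1"
    using card_wrap_image[OF n_pos] n_ge by auto
  consider ?L ?R | ?L "\<not> ?R" | "\<not> ?L" ?R | "\<not> ?L" "\<not> ?R"
    by blast
  then show ?thesis
  proof cases
    case 1
    then have count: "of_bool ?L + of_bool ?R = (2::nat)"
      by simp
    have "NB x = wrap n ` {c - m..c} \<union> wrap n ` {c..c + m}"
      unfolding x(2) image_Un[symmetric] by (intro arg_cong[where f = "image (wrap n)"]) auto
    then have "NB x - D = NB x"
      using left[OF 1(1)] right[OF 1(2)] by blast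
    then show ?thesis
      unfolding count using card_NB[OF assms(1)] by simp
  next
    case 2
    then have count: "of_bool ?L + of_bool ?R = (1::nat)"
      by simp
    show ?thesis
      unfolding count using card_mono[OF fin left[OF 2(1)]] half by simp
  next
    case 3
    then have count: "of_bool ?L + of_bool ?R = (1::nat)"
      by simp
    show ?thesis
      unfolding count using card_mono[OF fin right[OF 3(2)]] half by simp
  next
    case 4
    then have count: "of_bool ?L + of_bool ?R = (0::nat)"
      by simp
    have "x \<in> NB x - D"
      using assms(2) self_in_closed_nbhd[OF assms(1)] by blast
    then show ?thesis
      unfolding count using fin by (simp add: Suc_le_eq card_gt_0_iff) blast
  qed
qed

lemma card_right_ends_private_step:
  assumes "D \<subseteq> GV" "x \<in> GV" "x \<notin> D"
  shows "m * card (right_ends n (D \<union> NB x)) + m + 1 \<le> m * card (right_ends n D) + card (NB x - D)"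
proof -
  define c where "c = int x"
  define bl where "bl = card (right_ends n D \<inter> wrap n ` {c - m - 1..c - 1})"
  define br where "br = card (right_ends n D \<inter> wrap n ` {c..c + m})"
  define e :: nat where "e = of_bool (wrap n (c + m + 1) \<notin> D)"
  have "card (right_ends n (D \<union> NB x)) + (bl + br) \<le> card (right_ends n D) + e"
    using card_right_ends_Un_window[OF n_pos assms(1), of c m]
      card_right_ends_window_split[OF n_pos, of m D c] n_ge NB_eq[OF assms(2)]
    unfolding bl_def br_def e_def c_def by simp
  then have window: "m * card (right_ends n (D \<union> NB x)) + m * (bl + br) \<le> m * card (right_ends n D) + m * e"
    using mult_le_mono2 by (metis add_mult_distrib2)
  have "m * (e + 1) \<le> m * (of_bool (bl \<noteq> 0) + of_bool (br \<noteq> 0) + of_bool (bl = 0) + of_bool (br = 0 \<and> e = 1))"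
    by (intro mult_le_mono2) (auto simp: e_def)
  also have "\<dots> \<le> m * (bl + br) + m * (of_bool (bl = 0) + of_bool (br = 0 \<and> e = 1))"
    unfolding add_mult_distrib2[symmetric] by (intro mult_le_mono2) auto
  finally have merge: "m * (e + 1) \<le> m * (bl + br) + m * (of_bool (bl = 0) + of_bool (br = 0 \<and> e = 1))" .
  have "m * (of_bool (bl = 0) + of_bool (br = 0 \<and> e = 1)) + 1 \<le> card (NB x - D)"
  proof -
    have "right_ends n D \<inter> wrap n ` {c - m - 1..c - 1} = {} \<longleftrightarrow> bl = 0"
      "right_ends n D \<inter> wrap n ` {c..c + m} = {} \<longleftrightarrow> br = 0"
      "wrap n (c + m + 1) \<notin> D \<longleftrightarrow> e = 1"
      unfolding bl_def br_def e_def by (simp_all add: finite_right_ends)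
    then show ?thesis
      using card_NB_Diff_private[OF assms(2,3), folded c_def] by simp
  qed
  then show ?thesis
    using window merge by (simp add: add_mult_distrib2)
qed

lemma legal_seq_private_bound:
  "legal_seq GV GE S \<Longrightarrow>
     m * (card (self_private GV GE S) + card (right_ends n (dominated GV GE S)))
       \<le> card (dominated GV GE S - set S)"
proof (induction S rule: rev_induct)
  case Nil
  then show ?case
    by (simp add: right_ends_def)
next
  case (snoc x S)
  define D where "D = dominated GV GE S"
  have S: "legal_seq GV GE S" and x: "x \<in> GV" "x \<notin> set S"
    using snoc.prems by (auto simp: legal_seq_snoc)
  have D: "D \<subseteq> GV"
    unfolding D_def by (rule dominated_subset)
  have count: "card ((D \<union> NB x) - set (S @ [x])) + 1 = card (D - set S) + card (NB x - D)"
    using card_dominated_Diff_snoc[OF _ snoc.prems] unfolding D_def by simp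
  note IH = snoc.IH[OF S, folded D_def]
  show ?case
  proof (cases "x \<in> D")
    case True
    then have "self_private GV GE (S @ [x]) = self_private GV GE S"
      using self_private_snoc[OF x(1)] D_def by simp
    moreover have "card (right_ends n (D \<union> NB x)) \<le> card (right_ends n D)"
      using card_right_ends_dominated_step[OF D x(1) True] .
    ultimately have "m * (card (self_private GV GE (S @ [x])) + card (right_ends n (D \<union> NB x)))
                     \<le> m * (card (self_private GV GE S) + card (right_ends n D))"
      by simp
    also have "\<dots> \<le> card ((D \<union> NB x) - set (S @ [x]))"
      using IH card_dominated_Diff_snoc_le[OF _ snoc.prems] unfolding D_def by simp
    finally show ?thesis
      unfolding D_def by simp
  next
    case False
    then have "self_private GV GE (S @ [x]) = insert x (self_private GV GE S)"
      using self_private_snoc[OF x(1)] D_def by simp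
    moreover have "x \<notin> self_private GV GE S"
      using self_private_subset[of GV GE S] x(2) by blast
    ultimately have "card (self_private GV GE (S @ [x])) = card (self_private GV GE S) + 1"
      using finite_self_private[of GV GE S] by simp
    then show ?thesis
      using IH count card_right_ends_private_step[OF D x(1) False] unfolding D_def dominated_snoc
      by (simp add: add_mult_distrib2)
  qed
qed

lemma right_ends_GV: "right_ends n GV = {}"
  using wrap_in_range[OF n_pos] by (auto simp: right_ends_def)

lemma eq_GV_if_no_right_ends:
  assumes "D \<subseteq> GV" "d \<in> D" "right_ends n D = {}"
  shows "D = GV"
proof
  have d: "d \<in> GV"
    using assms by auto
  have walk: "wrap n (int d + int k) \<in> D" for k
  proof (induction k)
    case 0
    then show ?case
      using assms(2) wrap_of_nat[OF d] by simp
  next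
    case (Suc k)
    then have "wrap n (int d + int k + 1) \<in> D"
      using assms(3) wrap_in_right_ends[OF n_pos] by blast
    then show ?case
      by (simp add: algebra_simps)
  qed
  show "GV \<subseteq> D"
  proof
    fix y assume "y \<in> GV"
    then obtain z where z: "z \<in> {int d..int d + int n - 1}" "y = wrap n z"
      using wrap_image_full[OF n_pos, of "int d"] by blast
    then have "z = int d + int (nat (z - int d))"
      by simp
    then show "y \<in> D"
      using walk[of "nat (z - int d)"] z(2) by metis
  qed
qed (use assms in simp)

lemma card_GV_Diff: "set S \<subseteq> GV \<Longrightarrow> distinct S \<Longrightarrow> card (GV - set S) = n - length S"
  by (simp add: card_Diff_subset distinct_card)

lemma legal_dom_seq_length_le:
  assumes "legal_dom_seq GV GE S"
  shows "m * card (self_private GV GE S) + length S \<le> n"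
proof -
  have S: "legal_seq GV GE S" "dominated GV GE S = GV"
    using assms by (simp_all add: legal_dom_seq_iff)
  then have "set S \<subseteq> GV" "distinct S"
    by (simp_all add: legal_seq_def)
  then have "length S \<le> n"
    using card_mono[of GV "set S"] distinct_card by fastforce
  moreover have "m * card (self_private GV GE S) \<le> card (GV - set S)"
    using legal_seq_private_bound[OF S(1)] unfolding S(2) right_ends_GV by simp
  ultimately show ?thesis
    using card_GV_Diff[OF \<open>set S \<subseteq> GV\<close> \<open>distinct S\<close>] by linarith
qed

lemma legal_dom_seq_length_le_two_m:
  assumes "legal_dom_seq GV GE S"
  shows "2 * m + length S \<le> n"
proof -
  have S: "legal_seq GV GE S" "dominated GV GE S = GV"
    using assms by (simp_all add: legal_dom_seq_iff)
  moreover have "S \<noteq> []"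
    using S(2) n_pos by auto
  ultimately obtain S0 x where S0: "S = S0 @ [x]"
    by (metis rev_exhaust)
  define D0 where "D0 = dominated GV GE S0"
  have S0_legal: "legal_seq GV GE S0" and x: "x \<in> GV" "NB x - D0 \<noteq> {}"
    using S(1) unfolding S0 D0_def by (auto simp: legal_seq_snoc)
  have S0_sub: "set S0 \<subseteq> GV"
    using S0_legal by (simp add: legal_seq_def)
  have "S0 \<noteq> []"
  proof
    assume "S0 = []"
    then have "NB x = GV"
      using S(2) unfolding S0 by simp
    then show False
      using card_NB[OF x(1)] n_ge by simp
  qed
  then have first: "S0 ! 0 \<in> self_private GV GE S0" "S0 ! 0 \<in> D0"
    using first_in_self_private[OF _ S0_sub] set_subset_dominated[OF S0_sub] unfolding D0_def
    by (auto simp: subset_iff)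
  have "D0 \<noteq> GV"
    using x(2) closed_nbhd_subset[of GV GE x] by blast
  moreover have "D0 \<subseteq> GV"
    unfolding D0_def by (rule dominated_subset)
  ultimately have "right_ends n D0 \<noteq> {}"
    using eq_GV_if_no_right_ends[OF _ first(2)] by blast
  then have "1 + 1 \<le> card (self_private GV GE S0) + card (right_ends n D0)"
    using first(1) by (intro add_mono) (auto simp: Suc_le_eq card_gt_0_iff finite_self_private
        finite_right_ends)
  then have "m * 2 \<le> m * (card (self_private GV GE S0) + card (right_ends n D0))"
    by (intro mult_le_mono2) simp
  also have "\<dots> \<le> card (D0 - set S0)"
    using legal_seq_private_bound[OF S0_legal] unfolding D0_def .
  also have "\<dots> \<le> card (GV - set S)"
    using card_dominated_Diff_snoc_le[OF _ S(1)[unfolded S0]] S(2) unfolding S0 D0_def by simp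
  finally show ?thesis
    using card_GV_Diff[of S] S(1) legal_dom_seq_length_le[OF assms]
    unfolding legal_seq_def by (simp add: mult.commute)
qed

lemma legal_dom_seq_length_le_max:
  assumes "legal_dom_seq GV GE S"
  shows "max 2 (card (self_private GV GE S)) * m + length S \<le> n"
  using legal_dom_seq_length_le[OF assms] legal_dom_seq_length_le_two_m[OF assms]
  by (simp add: max_def mult.commute)

end

section \<open>The lower bound\<close>

definition next_above :: "int set \<Rightarrow> int \<Rightarrow> int" where
  "next_above Q t = Min {p \<in> Q. t < p}"

lemma next_above_mem:
  assumes "finite Q" "T \<in> Q" "t < T"
  shows "next_above Q t \<in> Q" "t < next_above Q t"
proof -
  have "finite {p \<in> Q. t < p}" "{p \<in> Q. t < p} \<noteq> {}"
    using assms by auto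
  from Min_in[OF this] show "next_above Q t \<in> Q" "t < next_above Q t"
    unfolding next_above_def by auto
qed

lemma next_above_le: "finite Q \<Longrightarrow> p \<in> Q \<Longrightarrow> t < p \<Longrightarrow> next_above Q t \<le> p"
  unfolding next_above_def by (intro Min_le) auto

lemma next_above_skip: "t + 1 \<notin> Q \<Longrightarrow> next_above Q (t + 1) = next_above Q t"
proof -
  assume "t + 1 \<notin> Q"
  then have "{p \<in> Q. t + 1 < p} = {p \<in> Q. t < p}"
    by (metis add1_zle_eq order.order_iff_strict)
  then show ?thesis
    unfolding next_above_def by simp
qed

lemma le_add1_iff_int: "(q::int) \<le> t + 1 \<longleftrightarrow> q \<le> t \<or> q = t + 1"
  by linarith

text \<open>\<open>Q\<close> is the set of integer positions of the independent set (from \<open>a\<close> to \<open>T\<close>),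
  \<open>lam\<close> the left end of the dominated arc and \<open>Base\<close> the positions chosen before the
  rightward sweep starts at \<open>a\<close>.\<close>

locale sweep = cycle_power +
  fixes Q :: "int set" and a T lam :: int and Base :: "int set"
  assumes finite_Q: "finite Q" and a_in_Q: "a \<in> Q" and T_in_Q: "T \<in> Q"
    and Q_range: "p \<in> Q \<Longrightarrow> a \<le> p \<and> p \<le> T"
    and Q_sep: "p \<in> Q \<Longrightarrow> p' \<in> Q \<Longrightarrow> p < p' \<Longrightarrow> p + m < p'"
    and lam_le: "lam \<le> a - m" and span: "T - lam \<le> n"
    and Base_sub: "Base \<subseteq> {lam + m..a}"
begin

definition free :: "int \<Rightarrow> bool" where
  "free q \<longleftrightarrow> \<not> (\<exists>p\<in>Q. q < p \<and> p \<le> q + m)"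

text \<open>The invariant after the sweep has handled the positions up to \<open>t\<close>: the dominated arc
  ends at \<open>t + m\<close>, or just before the next element of \<open>Q\<close> if that comes earlier.\<close>

definition state :: "int \<Rightarrow> nat list \<Rightarrow> bool" where
  "state t S \<longleftrightarrow> legal_seq GV GE S
     \<and> dominated GV GE S = wrap n ` {lam..min (t + m) (next_above Q t - 1)}
     \<and> self_private GV GE S = wrap n ` {p \<in> Q. p \<le> t}
     \<and> set S = wrap n ` (Base \<union> {q. a < q \<and> q \<le> t \<and> free q})"

lemma state_start:
  assumes "legal_seq GV GE S" "dominated GV GE S = wrap n ` {lam..a + m}"
    and "self_private GV GE S = {wrap n a}" "set S = wrap n ` Base" "a < T"
  shows "state a S"
proof -
  have "a + m < next_above Q a"
    using Q_sep next_above_mem[OF finite_Q T_in_Q assms(5)] a_in_Q by auto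
  moreover have "{p \<in> Q. p \<le> a} = {a}"
    using a_in_Q Q_range by force
  moreover have "Base \<union> {q. a < q \<and> q \<le> a \<and> free q} = Base"
    by auto
  ultimately show ?thesis
    using assms unfolding state_def by (simp only:) (simp add: min_def)
qed

lemma free_next_above:
  assumes "free (t + 1)" "t + 1 < T"
  shows "t + 1 + m < next_above Q (t + 1)"
  using next_above_mem[OF finite_Q T_in_Q assms(2)] assms(1) unfolding free_def by force

lemma legal_seq_step_free:
  assumes S: "state t S" and t: "a \<le> t" "t + 1 < T" and free: "free (t + 1)"
  shows "legal_seq GV GE (S @ [wrap n (t + 1)])"
proof -
  define x where "x = wrap n (t + 1)"
  have x: "x \<in> GV"
    unfolding x_def using wrap_in_range[OF n_pos] .
  have "t + 1 + m < T"
    using free_next_above[OF free t(2)] next_above_le[OF finite_Q T_in_Q, of "t + 1"] t by simp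
  have S': "legal_seq GV GE S" "dominated GV GE S = wrap n ` {lam..min (t + m) (next_above Q t - 1)}"
    "set S = wrap n ` (Base \<union> {q. a < q \<and> q \<le> t \<and> free q})"
    using S unfolding state_def by auto
  have "x \<notin> set S"
    unfolding S'(3) x_def
    by (rule wrap_notin_image[OF n_pos, of lam _ "t + 1"]) (use lam_le t span Base_sub in auto)
  moreover have "wrap n (t + 1 + m) \<notin> wrap n ` {lam..t + m}"
    by (rule wrap_notin_image[OF n_pos, of lam _ "t + 1 + m"])
      (use \<open>t + 1 + m < T\<close> span lam_le t in auto)
  then have "wrap n (t + 1 + m) \<in> NB x - dominated GV GE S"
    unfolding S'(2) x_def NB_wrap by auto
  ultimately show ?thesis
    using S'(1) x unfolding x_def by (auto simp: legal_seq_snoc)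
qed

lemma self_private_step_free:
  assumes S: "state t S" and t: "a \<le> t" "t + 1 < T" and free: "free (t + 1)"
  shows "self_private GV GE (S @ [wrap n (t + 1)]) = wrap n ` {p \<in> Q. p \<le> t + 1}"
proof -
  define x where "x = wrap n (t + 1)"
  have S': "dominated GV GE S = wrap n ` {lam..min (t + m) (next_above Q t - 1)}"
    "self_private GV GE S = wrap n ` {p \<in> Q. p \<le> t}"
    using S unfolding state_def by auto
  have x: "x \<in> GV"
    unfolding x_def using wrap_in_range[OF n_pos] .
  show ?thesis
  proof (cases "t + 1 \<in> Q")
    case True
    have "next_above Q t = t + 1"
      using next_above_mem[OF finite_Q T_in_Q, of t] next_above_le[OF finite_Q True, of t] t by simp
    then have "dominated GV GE S = wrap n ` {lam..t}"
      unfolding S'(1) by simp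
    moreover have "x \<notin> wrap n ` {lam..t}"
      unfolding x_def by (rule wrap_notin_image[OF n_pos, of lam _ "t + 1"]) (use t span lam_le in auto)
    moreover have "{p \<in> Q. p \<le> t + 1} = insert (t + 1) {p \<in> Q. p \<le> t}"
      using True by auto
    ultimately show ?thesis
      using self_private_snoc[OF x, of GE S] S'(2) x_def by simp
  next
    case False
    then have "x \<in> dominated GV GE S"
      unfolding S'(1) x_def next_above_skip[OF False, symmetric]
      using free_next_above[OF free t(2)] lam_le t m_pos by auto
    moreover have "{p \<in> Q. p \<le> t + 1} = {p \<in> Q. p \<le> t}"
      using False by (auto simp: le_add1_iff_int)
    ultimately show ?thesis
      using self_private_snoc[OF x, of GE S] S'(2) x_def by simp
  qed
qed

lemma state_step_free:
  assumes S: "state t S" and t: "a \<le> t" "t + 1 < T" and free: "free (t + 1)"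
  shows "state (t + 1) (S @ [wrap n (t + 1)])"
proof -
  define x where "x = wrap n (t + 1)"
  define nq where "nq = next_above Q t"
  have S': "dominated GV GE S = wrap n ` {lam..min (t + m) (nq - 1)}"
    "set S = wrap n ` (Base \<union> {q. a < q \<and> q \<le> t \<and> free q})"
    using S unfolding state_def nq_def by auto
  have nq: "nq \<in> Q" "t < nq"
    using next_above_mem[OF finite_Q T_in_Q] t unfolding nq_def by auto
  note next_far = free_next_above[OF free t(2)]
  consider "t + 1 \<in> Q" "nq = t + 1" | "t + 1 \<notin> Q" "nq = next_above Q (t + 1)"
    using nq next_above_le[OF finite_Q, of "t + 1" t] next_above_skip unfolding nq_def by force
  then have "min (t + m) (nq - 1) \<in> {t, t + m}"
    by cases (use next_far in auto)
  then have "{lam..min (t + m) (nq - 1)} \<union> {t + 1 - m..t + 1 + m} = {lam..t + 1 + m}"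
    using lam_le t m_pos by auto
  then have "dominated GV GE (S @ [x]) = wrap n ` {lam..min (t + 1 + m) (next_above Q (t + 1) - 1)}"
    unfolding dominated_snoc S'(1) x_def NB_wrap using next_far by (simp add: image_Un[symmetric])
  moreover have "{q. a < q \<and> q \<le> t + 1 \<and> free q} = insert (t + 1) {q. a < q \<and> q \<le> t \<and> free q}"
    using free t by (auto simp: le_add1_iff_int)
  then have "set (S @ [x]) = wrap n ` (Base \<union> {q. a < q \<and> q \<le> t + 1 \<and> free q})"
    using S'(2) x_def by auto
  ultimately show ?thesis
    unfolding state_def x_def[symmetric]
    using legal_seq_step_free[OF assms, folded x_def] self_private_step_free[OF assms, folded x_def]
    by blast
qed

lemma state_step_blocked:
  assumes S: "state t S" and t: "t + 1 < T" and blocked: "\<not> free (t + 1)"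
  shows "state (t + 1) S"
proof -
  obtain p where p: "p \<in> Q" "t + 1 < p" "p \<le> t + 1 + m"
    using blocked unfolding free_def by auto
  have "t + 1 \<notin> Q"
    using Q_sep p by force
  then have nq: "next_above Q (t + 1) = next_above Q t"
    by (rule next_above_skip)
  have "next_above Q t \<le> p"
    using next_above_le[OF finite_Q p(1)] p by simp
  then have "min (t + m) (next_above Q t - 1) = min (t + 1 + m) (next_above Q (t + 1) - 1)"
    using p nq by auto
  moreover have "{p \<in> Q. p \<le> t + 1} = {p \<in> Q. p \<le> t}"
    using \<open>t + 1 \<notin> Q\<close> by (auto simp: le_add1_iff_int)
  moreover have "{q. a < q \<and> q \<le> t + 1 \<and> free q} = {q. a < q \<and> q \<le> t \<and> free q}"
    using blocked by (auto simp: le_add1_iff_int)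
  ultimately show ?thesis
    using S unfolding state_def by simp
qed

lemma state_reach:
  assumes "state a S0" "a < T"
  shows "\<exists>S. state (T - 1) S"
proof -
  have "\<exists>S. state (a + int k) S" if "a + int k < T" for k
    using that
  proof (induction k)
    case 0
    then show ?case
      using assms(1) by auto
  next
    case (Suc k)
    then obtain S where "state (a + int k) S"
      by auto
    then have "\<exists>S. state (a + int k + 1) S"
      using state_step_free[of "a + int k" S] state_step_blocked[of "a + int k" S] Suc.prems
      by (cases "free (a + int k + 1)") auto
    then show ?case
      by (simp add: algebra_simps)
  qed
  from this[of "nat (T - 1 - a)"] show ?thesis
    using assms(2) by simp
qed

lemma state_final:
  assumes "state (T - 1) S" "a < T"
  shows "dominated GV GE S = wrap n ` {lam..T - 1}" "self_private GV GE S = wrap n ` (Q - {T})"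
proof -
  have "next_above Q (T - 1) = T"
    using next_above_mem[OF finite_Q T_in_Q, of "T - 1"] Q_range by force
  then show "dominated GV GE S = wrap n ` {lam..T - 1}"
    using assms(1) unfolding state_def by simp
  have "{p \<in> Q. p \<le> T - 1} = Q - {T}"
    using Q_range by force
  then show "self_private GV GE S = wrap n ` (Q - {T})"
    using assms(1) unfolding state_def by simp
qed

lemma card_not_free_le: "card {q. a < q \<and> q \<le> T - 1 \<and> \<not> free q} \<le> (card Q - 1) * m"
proof -
  have "{q. a < q \<and> q \<le> T - 1 \<and> \<not> free q} \<subseteq> (\<Union>p\<in>Q - {a}. {p - m..p - 1})"
    unfolding free_def by force
  then have "card {q. a < q \<and> q \<le> T - 1 \<and> \<not> free q} \<le> card (\<Union>p\<in>Q - {a}. {p - m..p - 1})"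
    by (intro card_mono) (auto simp: finite_Q)
  also have "\<dots> \<le> (\<Sum>p\<in>Q - {a}. card {p - m..p - 1})"
    by (rule card_UN_le) (simp add: finite_Q)
  also have "\<dots> = (card Q - 1) * m"
    using a_in_Q finite_Q by simp
  finally show ?thesis .
qed

lemma legal_dom_seq_close:
  assumes S: "state (T - 1) S" and "a < T" and lam: "lam = T + 1 - int n"
  shows "legal_dom_seq GV GE (S @ [wrap n T]) \<and> self_private GV GE (S @ [wrap n T]) = wrap n ` Q"
proof -
  define x where "x = wrap n T"
  have dom_S: "dominated GV GE S = wrap n ` {lam..T - 1}"
    and private_S: "self_private GV GE S = wrap n ` (Q - {T})"
    using state_final[OF S \<open>a < T\<close>] by auto
  have x: "x \<in> GV"
    unfolding x_def using wrap_in_range[OF n_pos] .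
  have x_new: "x \<notin> dominated GV GE S"
    unfolding dom_S x_def using lam n_pos by (intro wrap_notin_image[OF n_pos, of lam _ T]) auto
  have S_legal: "legal_seq GV GE S"
    using S unfolding state_def by blast
  have "x \<notin> set S"
    using x_new set_subset_dominated[of S GV GE] S_legal unfolding legal_seq_def by blast
  moreover have "x \<in> NB x - dominated GV GE S"
    using x_new self_in_closed_nbhd[OF x] by blast
  ultimately have legal: "legal_seq GV GE (S @ [x])"
    using S_legal x unfolding legal_seq_snoc by blast
  have "GV = wrap n ` {lam..lam + int n - 1}"
    using wrap_image_full[OF n_pos] by simp
  also have "\<dots> \<subseteq> wrap n ` ({lam..T - 1} \<union> {T - m..T + m})"
    using lam by (intro image_mono) auto
  also have "\<dots> = dominated GV GE (S @ [x])"
    unfolding dominated_snoc dom_S x_def NB_wrap image_Un ..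
  finally have "dominated GV GE (S @ [x]) = GV"
    using dominated_subset[of GV GE "S @ [x]"] by (rule antisym[rotated])
  moreover have "self_private GV GE (S @ [x]) = wrap n ` Q"
    using self_private_snoc[OF x, of GE S] x_new private_S T_in_Q unfolding x_def by auto
  ultimately show ?thesis
    using legal unfolding x_def by (simp add: legal_dom_seq_iff)
qed

lemma card_uncovered_close:
  assumes S: "state (T - 1) S" and lam: "lam = T + 1 - int n" and Base: "Base = {lam + m..a}"
  shows "card (GV - set (S @ [wrap n T])) \<le> card Q * m"
proof -
  let ?N = "{q. a < q \<and> q \<le> T - 1 \<and> \<not> free q}"
  have cover: "GV - set (S @ [wrap n T]) \<subseteq> wrap n ` ({lam..lam + m - 1} \<union> ?N)"
  proof
    fix y assume y: "y \<in> GV - set (S @ [wrap n T])"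
    moreover have "GV = wrap n ` {lam..lam + int n - 1}"
      using wrap_image_full[OF n_pos] by simp
    ultimately obtain q where q: "q \<in> {lam..lam + int n - 1}" "y = wrap n q"
      by blast
    have "set (S @ [wrap n T]) = wrap n ` ({lam + m..a} \<union> {q. a < q \<and> q \<le> T - 1 \<and> free q} \<union> {T})"
      using S Base unfolding state_def by auto
    then have "q \<notin> {lam + m..a} \<union> {q. a < q \<and> q \<le> T - 1 \<and> free q} \<union> {T}"
      using y q by auto
    then show "y \<in> wrap n ` ({lam..lam + m - 1} \<union> ?N)"
      using q lam by auto
  qed
  have "finite ?N"
    by (rule finite_subset[of _ "{a..T}"]) auto
  then have "card (GV - set (S @ [wrap n T])) \<le> card ({lam..lam + m - 1} \<union> ?N)"
    using card_mono[OF _ cover] card_image_le le_trans by blast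
  also have "\<dots> \<le> m + (card Q - 1) * m"
    using card_Un_le[of "{lam..lam + m - 1}" ?N] card_not_free_le by simp
  also have "\<dots> = card Q * m"
    using a_in_Q finite_Q by (cases "card Q") auto
  finally show ?thesis .
qed

end

context cycle_power
begin

lemma exists_leftward_seq:
  fixes a :: int
  assumes "int j + 2 * m < n"
  shows "\<exists>S. legal_seq GV GE S \<and> dominated GV GE S = wrap n ` {a - int j - m..a + m}
           \<and> self_private GV GE S = {wrap n a} \<and> set S = wrap n ` {a - int j..a}"
  using assms
proof (induction j)
  case 0
  have a: "wrap n a \<in> GV"
    using wrap_in_range[OF n_pos] .
  then show ?case
    using NB_wrap[of a] legal_seq_single[OF a] self_private_single[OF a]
    by (intro exI[of _ "[wrap n a]"]) simp
next
  case (Suc j)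
  then obtain S where S: "legal_seq GV GE S" "dominated GV GE S = wrap n ` {a - int j - m..a + m}"
      "self_private GV GE S = {wrap n a}" "set S = wrap n ` {a - int j..a}"
    by auto
  define x where "x = wrap n (a - int j - 1)"
  have x: "x \<in> GV"
    unfolding x_def using wrap_in_range[OF n_pos] .
  have x_dom: "x \<in> dominated GV GE S"
    unfolding S(2) x_def using m_pos by auto
  have "x \<notin> set S"
    unfolding S(4) x_def by (rule wrap_notin_image[OF n_pos, of "a - int j - 1" _ a]) (use Suc.prems in auto)
  moreover have "wrap n (a - int j - 1 - m) \<notin> dominated GV GE S"
    unfolding S(2)
    by (rule wrap_notin_image[OF n_pos, of "a - int j - 1 - m" _ "a + m"]) (use Suc.prems in auto)
  moreover have "wrap n (a - int j - 1 - m) \<in> NB x"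
    unfolding x_def NB_wrap by auto
  ultimately have "legal_seq GV GE (S @ [x])"
    using S(1) x by (auto simp: legal_seq_snoc)
  moreover have "dominated GV GE (S @ [x]) = wrap n ` {a - int (Suc j) - m..a + m}"
  proof -
    have "{a - int j - m..a + m} \<union> {a - int j - 1 - m..a - int j - 1 + m} = {a - int (Suc j) - m..a + m}"
      using m_pos by auto
    then show ?thesis
      unfolding dominated_snoc S(2) x_def NB_wrap by (simp add: image_Un[symmetric])
  qed
  moreover have "self_private GV GE (S @ [x]) = {wrap n a}"
    using self_private_snoc[OF x] x_dom S(3) by simp
  moreover have "set (S @ [x]) = wrap n ` {a - int (Suc j)..a}"
  proof -
    have "{a - int (Suc j)..a} = insert (a - int j - 1) {a - int j..a}"
      by auto
    then show ?thesis
      using S(4) x_def by simp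
  qed
  ultimately show ?case
    by blast
qed

lemma exists_legal_dom_seq_single:
  assumes v: "v \<in> GV"
  shows "\<exists>S. legal_dom_seq GV GE S \<and> self_private GV GE S = {v} \<and> length S = n - 2 * m"
proof -
  define a where "a = int v"
  define T where "T = a + int n - m"
  have a: "wrap n a = v"
    using wrap_of_nat[OF v] a_def by simp
  have aT: "a + m < T"
    using n_ge unfolding T_def by simp
  interpret sweep n m "{a, T}" a T "a - m" "{a}"
    by unfold_locales (use aT in \<open>auto simp: T_def\<close>)
  have "state a [v]"
    using legal_seq_single[OF v] self_private_single[OF v] NB_eq[OF v] aT a
    by (intro state_start) (auto simp: a_def)
  then obtain S where S: "state (T - 1) S"
    using state_reach aT by auto
  have dom_S: "dominated GV GE S = wrap n ` {a - m..T - 1}"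
    and private_S: "self_private GV GE S = wrap n ` ({a, T} - {T})"
    using state_final[OF S] aT by auto
  have "dominated GV GE S = wrap n ` {a - m..a - m + int n - 1}"
    using dom_S unfolding T_def by (simp add: algebra_simps)
  then have "dominated GV GE S = GV"
    using wrap_image_full[OF n_pos, of "a - m"] by simp
  moreover have S_legal: "legal_seq GV GE S"
    using S unfolding state_def by blast
  ultimately have "legal_dom_seq GV GE S"
    by (simp add: legal_dom_seq_iff)
  moreover have "self_private GV GE S = {v}"
    using private_S aT a by auto
  moreover have "length S = n - 2 * m"
  proof -
    have "{a} \<union> {q. a < q \<and> q \<le> T - 1 \<and> free q} = {a..a + int n - 2 * m - 1}"
      using aT unfolding free_def by (auto simp: T_def)
    then have "set S = wrap n ` {a..a + int n - 2 * m - 1}"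
      using S unfolding state_def by simp
    moreover have "card (wrap n ` {a..a + int n - 2 * m - 1}) = n - 2 * m"
      using card_wrap_image[OF n_pos, of "a + int n - 2 * m - 1" a] n_ge by simp
    ultimately show ?thesis
      using distinct_card S_legal unfolding legal_seq_def by metis
  qed
  ultimately show ?thesis
    by blast
qed

lemma independent_int_gap:
  assumes "I \<subseteq> GV" "\<forall>u\<in>I. \<forall>v\<in>I. \<not> cpow_adj n m u v"
    and "p \<in> int ` I" "p' \<in> int ` I" "p < p'"
  shows "p + m < p' \<and> p' - p < int n - m"
proof -
  obtain u v where uv: "u \<in> I" "v \<in> I" "p = int u" "p' = int v"
    using assms(3,4) by blast
  then have "\<not> cyc_dist n u v \<le> m"
    using assms(1,2,5) unfolding cpow_adj_def by auto
  then show ?thesis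
    using uv assms(1,5) cyc_dist_le_iff[of v n u m] by auto
qed

lemma exists_legal_dom_seq_independent:
  assumes I: "I \<subseteq> GV" "\<forall>u\<in>I. \<forall>v\<in>I. \<not> cpow_adj n m u v" "2 \<le> card I"
  shows "\<exists>S. legal_dom_seq GV GE S \<and> self_private GV GE S = I \<and> n - card I * m \<le> length S"
proof -
  define Q where "Q = int ` I"
  define a where "a = Min Q"
  define T where "T = Max Q"
  define lam where "lam = T + 1 - int n"
  have fin: "finite Q" and card_Q: "card Q = card I"
    using finite_subset[OF I(1)] unfolding Q_def by (auto simp: card_image)
  moreover have "Q \<noteq> {}"
    using card_Q I(3) by auto
  ultimately have a: "a \<in> Q" and T: "T \<in> Q" and range: "\<And>p. p \<in> Q \<Longrightarrow> a \<le> p \<and> p \<le> T"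
    unfolding a_def T_def by auto
  have gap: "p + m < p' \<and> p' - p < int n - m" if "p \<in> Q" "p' \<in> Q" "p < p'" for p p'
    using independent_int_gap[OF I(1,2)] that unfolding Q_def by blast
  have "a \<noteq> T"
  proof
    assume "a = T"
    then have "Q \<subseteq> {a}"
      using range by force
    then show False
      using card_mono[of "{a}" Q] I(3) card_Q by simp
  qed
  then have aT: "a + m < T" "T - a < int n - m"
    using gap[OF a T] range[OF T] by auto
  have "lam \<le> a - m"
    using aT(2) unfolding lam_def by simp
  interpret sweep n m Q a T lam "{lam + m..a}"
    by unfold_locales (use fin a T range gap \<open>lam \<le> a - m\<close> in \<open>auto simp: lam_def\<close>)
  define j where "j = nat (a - lam - m)"
  have j: "a - int j - m = lam" "a - int j = lam + m"
    using \<open>lam \<le> a - m\<close> unfolding j_def by simp_all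
  obtain S0 where "legal_seq GV GE S0"
      "dominated GV GE S0 = wrap n ` {a - int j - m..a + m}"
      "self_private GV GE S0 = {wrap n a}" "set S0 = wrap n ` {a - int j..a}"
    using exists_leftward_seq[of j a] aT j unfolding lam_def by auto
  then have "state a S0"
    unfolding j(1) unfolding j(2) using aT by (intro state_start) simp_all
  then obtain S where S: "state (T - 1) S"
    using state_reach aT by auto
  have close: "legal_dom_seq GV GE (S @ [wrap n T])" "self_private GV GE (S @ [wrap n T]) = wrap n ` Q"
    using legal_dom_seq_close[OF S _ lam_def] aT by auto
  have "wrap n ` Q = I"
    unfolding Q_def using I(1) by (force simp: image_image wrap_of_nat)
  moreover have "n - length (S @ [wrap n T]) \<le> card I * m"
    using card_GV_Diff[of "S @ [wrap n T]"] close(1) card_uncovered_close[OF S lam_def refl] card_Q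
    unfolding legal_dom_seq_def by simp
  ultimately show ?thesis
    using close by (intro exI[of _ "S @ [wrap n T]"]) auto
qed

lemma exists_legal_dom_seq_length_ge:
  assumes "I \<subseteq> GV" "\<forall>u\<in>I. \<forall>v\<in>I. \<not> cpow_adj n m u v" "I \<noteq> {}"
  shows "\<exists>S. legal_dom_seq GV GE S \<and> self_private GV GE S = I \<and> n - max 2 (card I) * m \<le> length S"
proof (cases "2 \<le> card I")
  case True
  then show ?thesis
    using exists_legal_dom_seq_independent[OF assms(1,2)] by (simp add: max_def mult.commute)
next
  case False
  moreover have "card I \<noteq> 0"
    using assms(1,3) finite_subset by fastforce
  ultimately obtain v where "I = {v}"
    by (metis One_nat_def card_1_singletonE le_less_linear less_2_cases)
  then show ?thesis
    using exists_legal_dom_seq_single[of v] assms(1) by auto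
qed

end

theorem lemma5:
  fixes n m :: nat and I :: "nat set"
  assumes "0 < n" and "0 < m" and "2 * (m + 1) \<le> n"
    and "I \<noteq> {}" and "independent {1..n} (cpow_adj n m) I"
  shows "gamma_gr {1..n} (cpow_adj n m) I =
           (if card I \<ge> 2 then ereal (real n - real (card I) * real m)
            else ereal (real n - 2 * real m))"
proof -
  interpret cycle_power n m
    using assms by unfold_locales auto
  have I: "I \<subseteq> GV" "\<forall>u\<in>I. \<forall>v\<in>I. \<not> cpow_adj n m u v"
    using assms(5) unfolding independent_def by auto
  define L where "L = n - max 2 (card I) * m"
  obtain S where S: "legal_dom_seq GV GE S" "self_private GV GE S = I" "L \<le> length S"
    using exists_legal_dom_seq_length_ge[OF I assms(4)] unfolding L_def by blast
  have "length S' \<le> L" if "legal_dom_seq GV GE S'" "I_S GV GE S' = I" for S'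
    using legal_dom_seq_length_le_max[OF that(1)] I_S_eq_self_private[OF that(1)] that(2)
    unfolding L_def by simp
  then have "gamma_gr GV GE I = ereal (real L)"
    using S I_S_eq_self_private[OF S(1)] by (intro gamma_gr_eqI) auto
  moreover have "max 2 (card I) * m \<le> n"
    using legal_dom_seq_length_le_max[OF S(1)] S(2) by simp
  ultimately show ?thesis
    unfolding L_def by (auto simp: of_nat_diff max_def)
qed

end
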